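(* Suppose that (i) $K:\mathbb R^p\rightrightarrows\mathbb R^n$ is lower semicontinuous, and (ii) $f:\mathbb R^p\times\mathbb R^n\times\mathbb R^n\to\mathbb R^m$ is $C$-u.s.c. (at every point). Then the function $\nu:\mathbb R^p\times\mathbb R^n\to[0,+\infty]$, $\nu(\xi,x)=\sup_{z\in K(\xi)}\operatorname{dist}(f(\xi,x,z),C)$, is lower semicontinuous on $\mathbb R^p\times\mathbb R^n$.
   Context: $C\subset\mathbb R^m$ is a nontrivial closed, convex, pointed cone. $K:\mathbb R^p\rightrightarrows\mathbb R^n$ is a set-valued mapping with closed graph and $K(\xi)\neq\emptyset$ for every $\xi\in\mathbb R^p$ (standing assumption). A mapping $g:X\to Y$ between Euclidean spaces is $C$-u.s.c. at $x_0$ if for every neighbourhood $V$ of $g(x_0)$ there is a neighbourhood $U$ of $x_0$ with $g(x)\in V-C$ for all $x\in U$; it is $C$-u.s.c. if this holds at every point. $\operatorname{dist}(y,C)=\inf_{c\in C}\|y-c\|$ (Euclidean norm). *)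

theory Defs
  imports "HOL-Analysis.Analysis" "HOL-Library.Extended_Real"
begin

definition setval_lsc_at :: "('a::topological_space \<Rightarrow> 'b::topological_space set) \<Rightarrow> 'a \<Rightarrow> bool" where
  "setval_lsc_at K x0 \<longleftrightarrow>
     (\<forall>V. open V \<and> V \<inter> K x0 \<noteq> {} \<longrightarrow>
        (\<exists>U. open U \<and> x0 \<in> U \<and> (\<forall>x\<in>U. K x \<inter> V \<noteq> {})))"

definition setval_lsc :: "('a::topological_space \<Rightarrow> 'b::topological_space set) \<Rightarrow> bool" where
  "setval_lsc K \<longleftrightarrow> (\<forall>x0. setval_lsc_at K x0)"

definition C_usc_at :: "'b::real_normed_vector set \<Rightarrow> ('a::topological_space \<Rightarrow> 'b) \<Rightarrow> 'a \<Rightarrow> bool" where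
  "C_usc_at C g x0 \<longleftrightarrow>
     (\<forall>V. open V \<and> g x0 \<in> V \<longrightarrow>
        (\<exists>U. open U \<and> x0 \<in> U \<and> (\<forall>x\<in>U. g x \<in> {v - c | v c. v \<in> V \<and> c \<in> C})))"

definition C_usc :: "'b::real_normed_vector set \<Rightarrow> ('a::topological_space \<Rightarrow> 'b) \<Rightarrow> bool" where
  "C_usc C g \<longleftrightarrow> (\<forall>x0. C_usc_at C g x0)"

definition ereal_lsc_at :: "('a::topological_space \<Rightarrow> ereal) \<Rightarrow> 'a \<Rightarrow> bool" where
  "ereal_lsc_at g x0 \<longleftrightarrow> g x0 \<le> Liminf (at x0) g"

definition ereal_lsc :: "('a::topological_space \<Rightarrow> ereal) \<Rightarrow> bool" where
  "ereal_lsc g \<longleftrightarrow> (\<forall>x0. ereal_lsc_at g x0)"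

end

theory Submission
  imports Defs
begin

text \<open>For a convex cone C the distance to C does not increase under adding an element of C,
  because C + C \<subseteq> C. Hence a C-u.s.c. map f keeps dist(f, C) lower semicontinuous: near w0
  the value f w lies in V - C for a small ball V around f w0. Lower semicontinuity then passes
  to the supremum over a lower semicontinuous family K(\<xi>): a point z0 \<in> K(\<xi>0) nearly attaining
  the supremum has nearby points z \<in> K(\<xi>) for all \<xi> close to \<xi>0, where the integrand is still
  large.\<close>

lemma infdist_le_infdist_diff_convex_cone:
  fixes C :: "'a::real_normed_vector set"
  assumes "convex C" "cone C" "c \<in> C"
  shows "infdist v C \<le> infdist (v - c) C"
proof -
  have "infdist v C \<le> dist (v - c) c'" if "c' \<in> C" for c'
  proof -
    have "c + c' \<in> C"
      using assms that convex_cone by blast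
    then have "infdist v C \<le> dist v (c + c')"
      by (rule infdist_le)
    also have "\<dots> = dist (v - c) c'"
      by (simp add: dist_norm algebra_simps)
    finally show ?thesis .
  qed
  then show ?thesis
    unfolding infdist_def[of "v - c"] using assms(3) by (auto intro!: cINF_greatest)
qed

lemma ereal_lsc_at_iff_eventually:
  "ereal_lsc_at g x0 \<longleftrightarrow> (\<forall>y < g x0. \<forall>\<^sub>F x in nhds x0. y < g x)"
  unfolding ereal_lsc_at_def le_Liminf_iff eventually_nhds_conv_at by blast

lemma ereal_lsc_at_compose:
  assumes "ereal_lsc_at g (h a)" "isCont h a"
  shows "ereal_lsc_at (g \<circ> h) a"
proof -
  have "filterlim h (nhds (h a)) (nhds a)"
    using assms(2) by (simp add: isCont_def tendsto_at_iff_tendsto_nhds)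
  with assms(1) show ?thesis
    unfolding ereal_lsc_at_iff_eventually filterlim_iff by auto
qed

lemma setval_lsc_at_compose:
  assumes "setval_lsc_at K (h a)" "isCont h a"
  shows "setval_lsc_at (K \<circ> h) a"
  unfolding setval_lsc_at_def
proof (intro allI impI)
  fix V assume "open V \<and> V \<inter> (K \<circ> h) a \<noteq> {}"
  then obtain U where "open U" "h a \<in> U" "\<forall>b\<in>U. K b \<inter> V \<noteq> {}"
    using assms(1) unfolding setval_lsc_at_def by auto
  moreover obtain W where "open W" "a \<in> W" "\<forall>x\<in>W. h x \<in> U"
    using assms(2) \<open>open U\<close> \<open>h a \<in> U\<close> unfolding continuous_at_open by blast
  ultimately show "\<exists>W. open W \<and> a \<in> W \<and> (\<forall>x\<in>W. (K \<circ> h) x \<inter> V \<noteq> {})"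
    by auto
qed

lemma C_usc_at_imp_ereal_lsc_at_infdist:
  fixes C :: "'m::real_normed_vector set"
  assumes "convex C" "cone C" "C_usc_at C f w0"
  shows "ereal_lsc_at (\<lambda>w. ereal (infdist (f w) C)) w0"
  unfolding ereal_lsc_at_iff_eventually
proof (intro allI impI)
  fix y assume "y < ereal (infdist (f w0) C)"
  then obtain r where r: "y < ereal r" "r < infdist (f w0) C"
    using ereal_dense2 by fastforce
  define e where "e = infdist (f w0) C - r"
  have "open (ball (f w0) e) \<and> f w0 \<in> ball (f w0) e"
    using r(2) by (simp add: e_def)
  then obtain U where U: "open U" "w0 \<in> U"
    and near: "\<forall>w\<in>U. f w \<in> {v - c | v c. v \<in> ball (f w0) e \<and> c \<in> C}"
    using assms(3) unfolding C_usc_at_def by blast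
  have "y < ereal (infdist (f w) C)" if w: "w \<in> U" for w
  proof -
    obtain v c where vc: "f w = v - c" "dist (f w0) v < e" "c \<in> C"
      using near w by auto
    have "infdist (f w0) C \<le> infdist v C + dist (f w0) v"
      by (rule infdist_triangle)
    moreover have "infdist v C \<le> infdist (f w) C"
      using infdist_le_infdist_diff_convex_cone[OF assms(1,2) vc(3)] vc(1) by simp
    ultimately have "r < infdist (f w) C"
      using vc(2) by (simp add: e_def)
    with r(1) show ?thesis
      by (simp add: less_trans)
  qed
  with U show "\<forall>\<^sub>F w in nhds w0. y < ereal (infdist (f w) C)"
    unfolding eventually_nhds by blast
qed

lemma ereal_lsc_at_SUP_setval_lsc:
  fixes K :: "'a::topological_space \<Rightarrow> 'b::topological_space set"
    and g :: "'a \<times> 'b \<Rightarrow> ereal"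
  assumes "setval_lsc_at K a0" "\<And>z. z \<in> K a0 \<Longrightarrow> ereal_lsc_at g (a0, z)"
  shows "ereal_lsc_at (\<lambda>a. SUP z\<in>K a. g (a, z)) a0"
  unfolding ereal_lsc_at_iff_eventually
proof (intro allI impI)
  fix y assume "y < (SUP z\<in>K a0. g (a0, z))"
  then obtain z0 where z0: "z0 \<in> K a0" "y < g (a0, z0)"
    by (auto simp: less_SUP_iff)
  then have "\<forall>\<^sub>F w in nhds (a0, z0). y < g w"
    using assms(2) unfolding ereal_lsc_at_iff_eventually by blast
  then obtain W where W: "open W" "(a0, z0) \<in> W" "\<forall>w\<in>W. y < g w"
    unfolding eventually_nhds by blast
  obtain A B where AB: "open A" "open B" "(a0, z0) \<in> A \<times> B" "A \<times> B \<subseteq> W"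
    using open_prod_elim[OF W(1,2)] by blast
  obtain U where U: "open U" "a0 \<in> U" "\<forall>a\<in>U. K a \<inter> B \<noteq> {}"
    using assms(1) AB(2,3) z0(1) unfolding setval_lsc_at_def by blast
  have "y < (SUP z\<in>K a. g (a, z))" if a: "a \<in> U \<inter> A" for a
  proof -
    obtain z where z: "z \<in> K a" "z \<in> B"
      using U(3) a by blast
    then have "y < g (a, z)"
      using a AB(4) W(3) by blast
    with z(1) show ?thesis
      by (auto simp: less_SUP_iff)
  qed
  moreover have "open (U \<inter> A)" "a0 \<in> U \<inter> A"
    using U AB by auto
  ultimately show "\<forall>\<^sub>F a in nhds a0. y < (SUP z\<in>K a. g (a, z))"
    unfolding eventually_nhds by blast
qed

theorem mainTheorem1:
  fixes C :: "'m::euclidean_space set"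
    and K :: "'p::euclidean_space \<Rightarrow> 'n::euclidean_space set"
    and f :: "'p \<times> 'n \<times> 'n \<Rightarrow> 'm"
  assumes C_closed: "closed C" and C_convex: "convex C" and C_cone: "cone C"
    and C_pointed: "C \<inter> uminus ` C = {0}"
    and C_nontrivial: "C \<noteq> {0}"
    and K_graph_closed: "closed {(\<xi>, x). x \<in> K \<xi>}"
    and K_nonempty: "\<And>\<xi>. K \<xi> \<noteq> {}"
    and K_lsc: "setval_lsc K"
    and f_usc: "C_usc C f"
  shows "ereal_lsc (\<lambda>(\<xi>, x). SUP z\<in>K \<xi>. ereal (infdist (f (\<xi>, x, z)) C))"
  unfolding ereal_lsc_def
proof
  fix a0 :: "'p \<times> 'n"
  define reassoc :: "('p \<times> 'n) \<times> 'n \<Rightarrow> 'p \<times> 'n \<times> 'n"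
    where "reassoc w = (fst (fst w), snd (fst w), snd w)" for w
  have "setval_lsc_at (K \<circ> fst) a0"
    using K_lsc by (intro setval_lsc_at_compose) (auto simp: setval_lsc_def)
  moreover have "ereal_lsc_at ((\<lambda>w. ereal (infdist (f w) C)) \<circ> reassoc) w" for w
  proof (rule ereal_lsc_at_compose)
    show "ereal_lsc_at (\<lambda>w. ereal (infdist (f w) C)) (reassoc w)"
      using f_usc unfolding C_usc_def by (intro C_usc_at_imp_ereal_lsc_at_infdist C_convex C_cone) blast
    show "isCont reassoc w"
      unfolding reassoc_def by (intro continuous_intros)
  qed
  ultimately have "ereal_lsc_at
      (\<lambda>a. SUP z\<in>(K \<circ> fst) a. ((\<lambda>w. ereal (infdist (f w) C)) \<circ> reassoc) (a, z)) a0"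
    by (rule ereal_lsc_at_SUP_setval_lsc)
  then show "ereal_lsc_at (\<lambda>(\<xi>, x). SUP z\<in>K \<xi>. ereal (infdist (f (\<xi>, x, z)) C)) a0"
    by (simp add: reassoc_def case_prod_beta')
qed

end
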